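(* For each integer $n\ge 3$ and each $Q\in\{Q_n(\mathscr{M}^{KI}_n),Q_n(\mathscr{M}^{KK}_n),Q_n(\mathscr{A}^{KK}_n),Q_n(\mathscr{H}^{KK}_n)\}$ we have $\alpha\text{-}\mathsf{tw}(Q)\le 2$ and $\alpha^{\ast}(Q)\le 3$.
   Context: Let $X^1,\dots,X^k$ be pairwise disjoint ordered sets $X^j=\{x^j_1,\dots,x^j_n\}$, and let $y^1,\dots,y^k,z^1,\dots,z^{k-1}$ be further distinct vertices. For ordered sets $X,Y$ of size $n$: the matching $\mathcal{M}(X,Y)$ has edges $x_iy_i$, the anti-matching $\mathcal{A}(X,Y)$ has edges $x_iy_j$ ($i\ne j$), the half-graph $\mathcal{H}(X,Y)$ has edges $x_iy_j$ ($i\le j$); $K(S)$ is the clique on $S$ and $K(S,T)$ the complete bipartite graph between $S$ and $T$; unions of graphs take the union of vertex and edge sets. Define $Q_k(\mathscr{M}^{KK}_n)=\bigcup_{i\in[k-1]}\mathcal{M}(X^i,X^{i+1})\cup\bigcup_{i\in[k]}K(\{y^i\}\cup X^i)$; $Q_k(\mathscr{M}^{KI}_n)=\bigcup_{i\in[k-1]}\mathcal{M}(X^i,X^{i+1})\cup\bigcup_{i\in[\lceil k/2\rceil]}K(\{y^{2i-1}\}\cup X^{2i-1})$; $Q_k(\mathscr{H}^{KK}_n)=\bigcup_{i\in[k-1]}\mathcal{H}(X^i,X^{i+1})\cup\bigcup_{i\in[k]}K(\{y^i\}\cup X^i)$; $Q_k(\mathscr{A}^{KK}_n)=\bigcup_{i\in[k-1]}\mathcal{A}(X^i,X^{i+1})\cup\bigcup_{i\in[k]}K(\{y^i\}\cup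 X^i)\cup\bigcup_{i\in[k-1]}K(\{z^i\},X^i\cup X^{i+1})$. $\alpha\text{-}\mathsf{tw}$ is the minimum over tree-decompositions of the maximum independence number of a bag, and $\alpha^{\ast}(G)=\max_v\alpha(G[N[v]])$. *)

theory Defs
  imports Main
begin

text \<open>A (simple) graph is a pair (vertex set, edge set), each edge a 2-element set.\<close>
type_synonym 'a graph = "'a set \<times> 'a set set"

definition gverts :: "'a graph \<Rightarrow> 'a set" where "gverts G = fst G"
definition gedges :: "'a graph \<Rightarrow> 'a set set" where "gedges G = snd G"

definition gunion :: "'a graph \<Rightarrow> 'a graph \<Rightarrow> 'a graph" where
  "gunion G H = (gverts G \<union> gverts H, gedges G \<union> gedges H)"

definition gUnion :: "'i set \<Rightarrow> ('i \<Rightarrow> 'a graph) \<Rightarrow> 'a graph" where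
  "gUnion I F = ((\<Union>i\<in>I. gverts (F i)), (\<Union>i\<in>I. gedges (F i)))"

text \<open>Ordered sets X = {x 1, ..., x n}, Y = {y 1, ..., y n} given by indexing functions.\<close>
definition matching_g :: "nat \<Rightarrow> (nat \<Rightarrow> 'a) \<Rightarrow> (nat \<Rightarrow> 'a) \<Rightarrow> 'a graph" where
  "matching_g n x y = (x ` {1..n} \<union> y ` {1..n},
     {{x i, y i} | i. i \<in> {1..n}})"

definition antimatching_g :: "nat \<Rightarrow> (nat \<Rightarrow> 'a) \<Rightarrow> (nat \<Rightarrow> 'a) \<Rightarrow> 'a graph" where
  "antimatching_g n x y = (x ` {1..n} \<union> y ` {1..n},
     {{x i, y j} | i j. i \<in> {1..n} \<and> j \<in> {1..n} \<and> i \<noteq> j})"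

definition halfgraph_g :: "nat \<Rightarrow> (nat \<Rightarrow> 'a) \<Rightarrow> (nat \<Rightarrow> 'a) \<Rightarrow> 'a graph" where
  "halfgraph_g n x y = (x ` {1..n} \<union> y ` {1..n},
     {{x i, y j} | i j. i \<in> {1..n} \<and> j \<in> {1..n} \<and> i \<le> j})"

definition clique_g :: "'a set \<Rightarrow> 'a graph" where
  "clique_g S = (S, {{u, v} | u v. u \<in> S \<and> v \<in> S \<and> u \<noteq> v})"

definition cbip_g :: "'a set \<Rightarrow> 'a set \<Rightarrow> 'a graph" where
  "cbip_g S T = (S \<union> T, {{s, t} | s t. s \<in> S \<and> t \<in> T \<and> s \<noteq> t})"

text \<open>Vertices: XV j i = x^j_i, YV j = y^j, ZV j = z^j.\<close>
datatype qv = XV nat nat | YV nat | ZV nat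

definition Xset :: "nat \<Rightarrow> nat \<Rightarrow> qv set" where
  "Xset n j = XV j ` {1..n}"

definition Q_MKK :: "nat \<Rightarrow> nat \<Rightarrow> qv graph" where
  "Q_MKK k n = gunion
     (gUnion {1..k-1} (\<lambda>i. matching_g n (XV i) (XV (i+1))))
     (gUnion {1..k} (\<lambda>i. clique_g (insert (YV i) (Xset n i))))"

definition Q_MKI :: "nat \<Rightarrow> nat \<Rightarrow> qv graph" where
  "Q_MKI k n = gunion
     (gUnion {1..k-1} (\<lambda>i. matching_g n (XV i) (XV (i+1))))
     (gUnion {1..(k+1) div 2} (\<lambda>i. clique_g (insert (YV (2*i-1)) (Xset n (2*i-1)))))"

definition Q_HKK :: "nat \<Rightarrow> nat \<Rightarrow> qv graph" where
  "Q_HKK k n = gunion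
     (gUnion {1..k-1} (\<lambda>i. halfgraph_g n (XV i) (XV (i+1))))
     (gUnion {1..k} (\<lambda>i. clique_g (insert (YV i) (Xset n i))))"

definition Q_AKK :: "nat \<Rightarrow> nat \<Rightarrow> qv graph" where
  "Q_AKK k n = gunion (gunion
     (gUnion {1..k-1} (\<lambda>i. antimatching_g n (XV i) (XV (i+1))))
     (gUnion {1..k} (\<lambda>i. clique_g (insert (YV i) (Xset n i)))))
     (gUnion {1..k-1} (\<lambda>i. cbip_g {ZV i} (Xset n i \<union> Xset n (i+1))))"

definition indep :: "'a graph \<Rightarrow> 'a set \<Rightarrow> bool" where
  "indep G I = (\<forall>u\<in>I. \<forall>v\<in>I. {u, v} \<notin> gedges G)"

definition alpha_on :: "'a graph \<Rightarrow> 'a set \<Rightarrow> nat" where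
  "alpha_on G S = Max {card I | I. I \<subseteq> S \<and> indep G I}"

definition closed_nbhd :: "'a graph \<Rightarrow> 'a \<Rightarrow> 'a set" where
  "closed_nbhd G v = insert v {u \<in> gverts G. {u, v} \<in> gedges G}"

definition alpha_star :: "'a graph \<Rightarrow> nat" where
  "alpha_star G = Max ((\<lambda>v. alpha_on G (closed_nbhd G v)) ` gverts G)"

definition connected_on :: "nat set \<Rightarrow> nat set set \<Rightarrow> bool" where
  "connected_on S E = (\<forall>a\<in>S. \<forall>b\<in>S.
      (a, b) \<in> {(u, v). u \<in> S \<and> v \<in> S \<and> {u, v} \<in> E}\<^sup>*)"

definition is_tree :: "nat set \<Rightarrow> nat set set \<Rightarrow> bool" where
  "is_tree N E = (finite N \<and> N \<noteq> {} \<and>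
     (\<forall>e\<in>E. \<exists>a b. e = {a, b} \<and> a \<noteq> b \<and> a \<in> N \<and> b \<in> N) \<and>
     connected_on N E \<and> card E + 1 = card N)"

definition tree_decomp :: "'a graph \<Rightarrow> nat set \<Rightarrow> nat set set \<Rightarrow> (nat \<Rightarrow> 'a set) \<Rightarrow> bool" where
  "tree_decomp G N E B = (is_tree N E \<and>
     (\<forall>t\<in>N. B t \<subseteq> gverts G) \<and>
     (\<forall>v\<in>gverts G. \<exists>t\<in>N. v \<in> B t) \<and>
     (\<forall>e\<in>gedges G. \<exists>t\<in>N. e \<subseteq> B t) \<and>
     (\<forall>v\<in>gverts G. connected_on {t \<in> N. v \<in> B t} E))"

definition alpha_tw :: "'a graph \<Rightarrow> nat" where
  "alpha_tw G = (LEAST k. \<exists>N E B. tree_decomp G N E B \<and> (\<forall>t\<in>N. alpha_on G (B t) \<le> k))"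

end

theory Submission
  imports Defs "HOL-Library.Nat_Bijection"
begin

text \<open>
  All four graphs are layered: consecutive layers X^i, X^(i+1) are joined by a matching, an
  anti-matching or a half-graph; every layer (for M^KI every odd layer) is completed to a clique
  by its apex y^i; and for A^KK the hub z^i is complete to X^i \<union> X^(i+1). Both bounds come from
  covering sets by few cliques, as an independent set meets each clique at most once.

  The closed neighbourhood of x \<in> X^i lies in the clique of its own layer together with, on
  either side, the clique formed by the neighbouring layer and the hub between the two; for M^KI
  the two matching partners of x take the place of the latter. Hence \<alpha>* \<le> 3.

  When all layers are cliques, the path with bags ({y^i} \<union> X^i) \<union> ({z^i} \<union> X^(i+1)) is a
  tree-decomposition whose bags are unions of two cliques. For M^KI the even layers are
  independent: a spine of bags, each joining two consecutive odd layers with their apexes,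
  carries for every even layer 2s+2 and every index a the leaf {x^(2s+1)_a, x^(2s+2)_a,
  x^(2s+3)_a}, covered by a matching edge and a single vertex. Hence \<alpha>-tw \<le> 2.
\<close>

definition is_clique :: "'a graph \<Rightarrow> 'a set \<Rightarrow> bool" where
  "is_clique G A \<longleftrightarrow> (\<forall>u\<in>A. \<forall>v\<in>A. u \<noteq> v \<longrightarrow> {u, v} \<in> gedges G)"

lemma is_clique_singleton [simp]: "is_clique G {v}"
  by (simp add: is_clique_def)

lemma card_indep_inter_clique_le_1:
  assumes "indep G I" "is_clique G A"
  shows "card (I \<inter> A) \<le> 1"
proof -
  have "u = v" if "u \<in> I \<inter> A" "v \<in> I \<inter> A" for u v
    using assms that unfolding indep_def is_clique_def by blast
  then show ?thesis
    by (cases "finite (I \<inter> A)") (auto simp: card_le_Suc0_iff_eq)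
qed

lemma card_indep_le_clique_cover:
  assumes "indep G I" "I \<subseteq> \<Union>(set Cs)" "\<forall>A\<in>set Cs. is_clique G A"
  shows "card I \<le> length Cs"
  using assms
proof (induction Cs arbitrary: I)
  case Nil
  then show ?case by simp
next
  case (Cons A Cs)
  have "indep G (I - A)"
    using Cons.prems(1) by (auto simp: indep_def)
  then have "card (I - A) \<le> length Cs"
    using Cons by auto
  moreover have "card (I \<inter> A) \<le> 1"
    using Cons.prems by (intro card_indep_inter_clique_le_1) auto
  moreover have "card I \<le> card (I \<inter> A) + card (I - A)"
    by (metis Int_Diff_Un card_Un_le)
  ultimately show ?case by simp
qed

lemma alpha_on_le_clique_cover:
  assumes "S \<subseteq> \<Union>(set Cs)" "\<forall>A\<in>set Cs. is_clique G A"
  shows "alpha_on G S \<le> length Cs"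
proof -
  let ?M = "{card I | I. I \<subseteq> S \<and> indep G I}"
  have bound: "?M \<subseteq> {..length Cs}"
    using assms card_indep_le_clique_cover[of G _ Cs] by fastforce
  moreover have "card {} \<in> ?M"
    by (intro CollectI exI[of _ "{}"]) (simp add: indep_def)
  ultimately show ?thesis
    unfolding alpha_on_def by (subst Max_le_iff) (auto intro: finite_subset)
qed

lemma alpha_star_le:
  assumes "gverts G \<noteq> {}" "\<And>v. v \<in> gverts G \<Longrightarrow> alpha_on G (closed_nbhd G v) \<le> c"
  shows "alpha_star G \<le> c"
proof -
  have "(\<lambda>v. alpha_on G (closed_nbhd G v)) ` gverts G \<subseteq> {..c}"
    using assms(2) by auto
  then show ?thesis
    unfolding alpha_star_def using assms(1) by (subst Max_le_iff) (auto intro: finite_subset)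
qed

lemma alpha_tw_le:
  assumes "tree_decomp G N E B" "\<And>t. t \<in> N \<Longrightarrow> alpha_on G (B t) \<le> c"
  shows "alpha_tw G \<le> c"
  unfolding alpha_tw_def using assms by (intro Least_le) blast

definition parent_edges :: "nat set \<Rightarrow> (nat \<Rightarrow> nat) \<Rightarrow> nat set set" where
  "parent_edges N p = (\<lambda>t. {t, p t}) ` (N - {0})"

lemma connected_on_parent_edges:
  assumes parent: "\<And>t. t \<in> N \<Longrightarrow> t \<noteq> 0 \<Longrightarrow> p t \<in> N \<and> p t < t"
    and S: "S \<subseteq> N" "r \<in> S" "\<And>t. t \<in> S \<Longrightarrow> t \<noteq> r \<Longrightarrow> t \<noteq> 0 \<and> p t \<in> S"
  shows "connected_on S (parent_edges N p)"
proof -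
  define R where "R = {(u, v). u \<in> S \<and> v \<in> S \<and> {u, v} \<in> parent_edges N p}"
  have to_root: "(t, r) \<in> R\<^sup>*" if "t \<in> S" for t
    using that
  proof (induction t rule: less_induct)
    case (less t)
    show ?case
    proof (cases "t = r")
      case False
      then have "t \<noteq> 0" "p t \<in> S"
        using S(3) less.prems by auto
      moreover from this have "(t, p t) \<in> R" "p t < t"
        using parent S(1) less.prems by (auto simp: R_def parent_edges_def)
      ultimately show ?thesis
        using less.IH by (meson converse_rtrancl_into_rtrancl)
    qed simp
  qed
  have "R\<inverse> = R"
    by (auto simp: R_def insert_commute)
  then have from_root: "(r, t) \<in> R\<^sup>*" if "t \<in> S" for t
    using rtrancl_converseI[OF to_root[OF that]] by simp
  show ?thesis
    unfolding connected_on_def R_def[symmetric] using to_root from_root by (meson rtrancl_trans)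
qed

lemma is_tree_parent_edges:
  assumes "finite N" "0 \<in> N" and parent: "\<And>t. t \<in> N \<Longrightarrow> t \<noteq> 0 \<Longrightarrow> p t \<in> N \<and> p t < t"
  shows "is_tree N (parent_edges N p)"
proof -
  have "inj_on (\<lambda>t. {t, p t}) (N - {0})"
  proof (rule inj_onI)
    fix s t assume "s \<in> N - {0}" "t \<in> N - {0}" and eq: "{s, p s} = {t, p t}"
    then have "p s < s" "p t < t"
      using parent by auto
    with eq show "s = t"
      by (auto simp: doubleton_eq_iff)
  qed
  then have "card (parent_edges N p) + 1 = card N"
    using assms(1,2) card_Suc_Diff1[of N 0] by (simp add: parent_edges_def card_image)
  moreover have "connected_on N (parent_edges N p)"
    using connected_on_parent_edges[of N p N 0] parent \<open>0 \<in> N\<close> by blast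
  moreover have "\<forall>e\<in>parent_edges N p. \<exists>a b. e = {a, b} \<and> a \<noteq> b \<and> a \<in> N \<and> b \<in> N"
    using parent unfolding parent_edges_def by fastforce
  ultimately show ?thesis
    unfolding is_tree_def using assms(1,2) by blast
qed

lemma tree_decomp_parent_edges:
  assumes "finite N" "0 \<in> N"
    and parent: "\<And>t. t \<in> N \<Longrightarrow> t \<noteq> 0 \<Longrightarrow> p t \<in> N \<and> p t < t"
    and bags: "\<And>t. t \<in> N \<Longrightarrow> B t \<subseteq> gverts G"
    and edges: "\<And>e. e \<in> gedges G \<Longrightarrow> \<exists>t\<in>N. e \<subseteq> B t"
    and root: "\<And>v. v \<in> gverts G \<Longrightarrow>
      \<exists>r\<in>N. v \<in> B r \<and> (\<forall>t\<in>N. v \<in> B t \<longrightarrow> t \<noteq> r \<longrightarrow> t \<noteq> 0 \<and> v \<in> B (p t))"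
  shows "tree_decomp G N (parent_edges N p) B"
  unfolding tree_decomp_def
proof (intro conjI ballI)
  show "is_tree N (parent_edges N p)"
    using is_tree_parent_edges assms(1,2) parent .
next
  fix v assume "v \<in> gverts G"
  then obtain r where r: "r \<in> N" "v \<in> B r"
    and up: "\<And>t. t \<in> N \<Longrightarrow> v \<in> B t \<Longrightarrow> t \<noteq> r \<Longrightarrow> t \<noteq> 0 \<and> v \<in> B (p t)"
    using root by blast
  show "\<exists>t\<in>N. v \<in> B t"
    using r by blast
  show "connected_on {t \<in> N. v \<in> B t} (parent_edges N p)"
    by (rule connected_on_parent_edges[OF parent, of _ r]) (use r up parent in auto)
qed (use bags edges in auto)

text \<open>
  A caterpillar: the spine is the path 0, ..., m - 1, and each (s, a) \<in> P is a leaf, numbered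
  m + prod_encode (s, a) and attached to spine node s.
\<close>

definition caterpillar_nodes :: "nat \<Rightarrow> (nat \<times> nat) set \<Rightarrow> nat set" where
  "caterpillar_nodes m P = {..<m} \<union> (\<lambda>(s, a). m + prod_encode (s, a)) ` P"

definition caterpillar_parent :: "nat \<Rightarrow> nat \<Rightarrow> nat" where
  "caterpillar_parent m t = (if t < m then t - 1 else fst (prod_decode (t - m)))"

definition caterpillar_bag :: "nat \<Rightarrow> (nat \<Rightarrow> 'a set) \<Rightarrow> (nat \<Rightarrow> nat \<Rightarrow> 'a set) \<Rightarrow> nat \<Rightarrow> 'a set"
  where "caterpillar_bag m S L t = (if t < m then S t else case_prod L (prod_decode (t - m)))"

lemma caterpillar_spine [simp]:
  "t < m \<Longrightarrow> caterpillar_parent m t = t - 1"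
  "t < m \<Longrightarrow> caterpillar_bag m S L t = S t"
  by (simp_all add: caterpillar_parent_def caterpillar_bag_def)

lemma caterpillar_leaf [simp]:
  "caterpillar_parent m (m + prod_encode (s, a)) = s"
  "caterpillar_bag m S L (m + prod_encode (s, a)) = L s a"
  by (simp_all add: caterpillar_parent_def caterpillar_bag_def)

lemma caterpillar_nodesE:
  assumes "t \<in> caterpillar_nodes m P"
  obtains (spine) "t < m" | (leaf) s a where "(s, a) \<in> P" "t = m + prod_encode (s, a)"
  using assms unfolding caterpillar_nodes_def by auto

lemma caterpillar_parent_less:
  assumes "\<And>s a. (s, a) \<in> P \<Longrightarrow> s < m" "t \<in> caterpillar_nodes m P" "t \<noteq> 0"
  shows "caterpillar_parent m t \<in> caterpillar_nodes m P \<and> caterpillar_parent m t < t"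
  using assms(2)
proof (cases rule: caterpillar_nodesE)
  case spine
  with assms(3) show ?thesis
    by (auto simp: caterpillar_nodes_def)
next
  case (leaf s a)
  then have "s < m"
    using assms(1) by blast
  with leaf show ?thesis
    by (auto simp: caterpillar_nodes_def)
qed

lemma finite_caterpillar_nodes: "finite P \<Longrightarrow> finite (caterpillar_nodes m P)"
  by (simp add: caterpillar_nodes_def)

definition edges_of :: "('a \<Rightarrow> 'a \<Rightarrow> bool) \<Rightarrow> 'a set set" where
  "edges_of P = {{u, v} | u v. P u v}"

lemma doubleton_in_edges_of: "{u, v} \<in> edges_of P \<longleftrightarrow> P u v \<or> P v u"
  unfolding edges_of_def by (auto simp: doubleton_eq_iff)

lemma edges_of_eqI:
  assumes "\<And>u v. P u v \<Longrightarrow> Q u v \<or> Q v u" "\<And>u v. Q u v \<Longrightarrow> P u v \<or> P v u"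
  shows "edges_of P = edges_of Q"
  using assms unfolding edges_of_def by (fastforce simp: insert_commute)

lemma Un_edges_of: "edges_of P \<union> edges_of Q = edges_of (\<lambda>u v. P u v \<or> Q u v)"
  by (auto simp: edges_of_def)

lemma UN_edges_of: "(\<Union>i\<in>I. edges_of (P i)) = edges_of (\<lambda>u v. \<exists>i\<in>I. P i u v)"
  by (auto simp: edges_of_def)

lemma gverts_gunion: "gverts (gunion G H) = gverts G \<union> gverts H"
  and gedges_gunion: "gedges (gunion G H) = gedges G \<union> gedges H"
  by (simp_all add: gunion_def gverts_def gedges_def)

lemma gverts_gUnion: "gverts (gUnion I F) = (\<Union>i\<in>I. gverts (F i))"
  and gedges_gUnion: "gedges (gUnion I F) = (\<Union>i\<in>I. gedges (F i))"
  by (simp_all add: gUnion_def gverts_def gedges_def)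

lemma gUnion_image: "gUnion (f ` I) F = gUnion I (\<lambda>i. F (f i))"
  by (simp add: gUnion_def image_image)

lemma gverts_matching_g: "gverts (matching_g n x y) = x ` {1..n} \<union> y ` {1..n}"
  and gverts_antimatching_g: "gverts (antimatching_g n x y) = x ` {1..n} \<union> y ` {1..n}"
  and gverts_halfgraph_g: "gverts (halfgraph_g n x y) = x ` {1..n} \<union> y ` {1..n}"
  and gverts_clique_g: "gverts (clique_g S) = S"
  and gverts_cbip_g: "gverts (cbip_g S T) = S \<union> T"
  by (simp_all add: gverts_def matching_g_def antimatching_g_def halfgraph_g_def clique_g_def cbip_g_def)

lemma gedges_matching_g: "gedges (matching_g n x y) = edges_of (\<lambda>u v. \<exists>i\<in>{1..n}. u = x i \<and> v = y i)"
  unfolding gedges_def matching_g_def edges_of_def snd_conv by blast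

lemma gedges_antimatching_g:
  "gedges (antimatching_g n x y) = edges_of (\<lambda>u v. \<exists>i\<in>{1..n}. \<exists>j\<in>{1..n}. i \<noteq> j \<and> u = x i \<and> v = y j)"
  unfolding gedges_def antimatching_g_def edges_of_def snd_conv by blast

lemma gedges_halfgraph_g:
  "gedges (halfgraph_g n x y) = edges_of (\<lambda>u v. \<exists>i\<in>{1..n}. \<exists>j\<in>{1..n}. i \<le> j \<and> u = x i \<and> v = y j)"
  unfolding gedges_def halfgraph_g_def edges_of_def snd_conv by blast

lemma gedges_clique_g: "gedges (clique_g S) = edges_of (\<lambda>u v. u \<in> S \<and> v \<in> S \<and> u \<noteq> v)"
  unfolding gedges_def clique_g_def edges_of_def snd_conv by blast

lemma gedges_cbip_g: "gedges (cbip_g S T) = edges_of (\<lambda>u v. u \<in> S \<and> v \<in> T \<and> u \<noteq> v)"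
  unfolding gedges_def cbip_g_def edges_of_def snd_conv by blast

lemmas graph_union_simps = gverts_gunion gedges_gunion gverts_gUnion gedges_gUnion
  gverts_matching_g gverts_antimatching_g gverts_halfgraph_g gverts_clique_g gverts_cbip_g
  gedges_matching_g gedges_antimatching_g gedges_halfgraph_g gedges_clique_g gedges_cbip_g
  Un_edges_of UN_edges_of

lemma XV_in_Xset [simp]: "XV i a \<in> Xset n j \<longleftrightarrow> i = j \<and> a \<in> {1..n}"
  and YV_notin_Xset [simp]: "YV i \<notin> Xset n j"
  and ZV_notin_Xset [simp]: "ZV i \<notin> Xset n j"
  by (auto simp: Xset_def)

lemma graph_eqI: "gverts G = gverts H \<Longrightarrow> gedges G = gedges H \<Longrightarrow> G = H"
  by (simp add: gverts_def gedges_def prod_eq_iff)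

text \<open>
  In layered_graph k n R K Z, x^i_a and x^(i+1)_b are adjacent iff R a b, the layer X^i is a
  clique with apex y^i iff K i, and the hubs z^i are present iff Z.
\<close>

fun layer_adj :: "nat \<Rightarrow> nat \<Rightarrow> (nat \<Rightarrow> nat \<Rightarrow> bool) \<Rightarrow> (nat \<Rightarrow> bool) \<Rightarrow> bool \<Rightarrow> qv \<Rightarrow> qv \<Rightarrow> bool"
where
  "layer_adj k n R K Z (XV i a) (XV j b) \<longleftrightarrow> i \<in> {1..k} \<and> j \<in> {1..k} \<and> a \<in> {1..n} \<and> b \<in> {1..n} \<and>
     (i = j \<and> a \<noteq> b \<and> K i \<or> j = i + 1 \<and> R a b \<or> i = j + 1 \<and> R b a)"
| "layer_adj k n R K Z (XV i a) (YV j) \<longleftrightarrow> j = i \<and> K i \<and> i \<in> {1..k} \<and> a \<in> {1..n}"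
| "layer_adj k n R K Z (YV j) (XV i a) \<longleftrightarrow> j = i \<and> K i \<and> i \<in> {1..k} \<and> a \<in> {1..n}"
| "layer_adj k n R K Z (XV i a) (ZV j) \<longleftrightarrow> Z \<and> j \<in> {1..k-1} \<and> (i = j \<or> i = j + 1) \<and> a \<in> {1..n}"
| "layer_adj k n R K Z (ZV j) (XV i a) \<longleftrightarrow> Z \<and> j \<in> {1..k-1} \<and> (i = j \<or> i = j + 1) \<and> a \<in> {1..n}"
| "layer_adj k n R K Z _ _ \<longleftrightarrow> False"

fun layer_vert :: "nat \<Rightarrow> nat \<Rightarrow> (nat \<Rightarrow> bool) \<Rightarrow> bool \<Rightarrow> qv \<Rightarrow> bool" where
  "layer_vert k n K Z (XV i a) \<longleftrightarrow> i \<in> {1..k} \<and> a \<in> {1..n}"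
| "layer_vert k n K Z (YV i) \<longleftrightarrow> i \<in> {1..k} \<and> K i"
| "layer_vert k n K Z (ZV i) \<longleftrightarrow> Z \<and> i \<in> {1..k-1}"

definition layered_graph :: "nat \<Rightarrow> nat \<Rightarrow> (nat \<Rightarrow> nat \<Rightarrow> bool) \<Rightarrow> (nat \<Rightarrow> bool) \<Rightarrow> bool \<Rightarrow> qv graph"
  where "layered_graph k n R K Z = (Collect (layer_vert k n K Z), edges_of (layer_adj k n R K Z))"

lemma layer_adj_sym: "layer_adj k n R K Z u v \<longleftrightarrow> layer_adj k n R K Z v u"
  by (cases u; cases v) auto

lemma gverts_layered_graph [simp]: "gverts (layered_graph k n R K Z) = Collect (layer_vert k n K Z)"
  by (simp add: layered_graph_def gverts_def)

lemma edge_layered_graph_iff [simp]: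
  "{u, v} \<in> gedges (layered_graph k n R K Z) \<longleftrightarrow> layer_adj k n R K Z u v"
  using layer_adj_sym by (auto simp: layered_graph_def gedges_def doubleton_in_edges_of)

lemma Q_MKK_layered: "Q_MKK k n = layered_graph k n (=) (\<lambda>_. True) False"
proof (rule graph_eqI)
  show "gverts (Q_MKK k n) = gverts (layered_graph k n (=) (\<lambda>_. True) False)"
    unfolding Q_MKK_def graph_union_simps by (auto simp: Xset_def elim!: layer_vert.elims)
  show "gedges (Q_MKK k n) = gedges (layered_graph k n (=) (\<lambda>_. True) False)"
    unfolding Q_MKK_def graph_union_simps unfolding layered_graph_def gedges_def snd_conv
    by (rule edges_of_eqI) (case_tac u; case_tac v; auto)+
qed

lemma Q_HKK_layered: "Q_HKK k n = layered_graph k n (\<le>) (\<lambda>_. True) False"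
proof (rule graph_eqI)
  show "gverts (Q_HKK k n) = gverts (layered_graph k n (\<le>) (\<lambda>_. True) False)"
    unfolding Q_HKK_def graph_union_simps by (auto simp: Xset_def elim!: layer_vert.elims)
  show "gedges (Q_HKK k n) = gedges (layered_graph k n (\<le>) (\<lambda>_. True) False)"
    unfolding Q_HKK_def graph_union_simps unfolding layered_graph_def gedges_def snd_conv
    by (rule edges_of_eqI) (case_tac u; case_tac v; auto)+
qed

lemma Q_AKK_layered: "Q_AKK k n = layered_graph k n (\<noteq>) (\<lambda>_. True) True"
proof (rule graph_eqI)
  show "gverts (Q_AKK k n) = gverts (layered_graph k n (\<noteq>) (\<lambda>_. True) True)"
    unfolding Q_AKK_def graph_union_simps by (auto simp: Xset_def elim!: layer_vert.elims)
  show "gedges (Q_AKK k n) = gedges (layered_graph k n (\<noteq>) (\<lambda>_. True) True)"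
    unfolding Q_AKK_def graph_union_simps unfolding layered_graph_def gedges_def snd_conv
    by (rule edges_of_eqI) (case_tac u; case_tac v; auto)+
qed

lemma odd_layer_indices: "(\<lambda>j. 2 * j - 1) ` {1..(k + 1) div 2} = {i \<in> {1..k::nat}. odd i}"
proof -
  have "i \<in> (\<lambda>j. 2 * j - 1) ` {1..(k + 1) div 2}" if "i \<in> {1..k}" "odd i" for i :: nat
    using that by (intro image_eqI[of _ _ "(i + 1) div 2"]) (auto; presburger)+
  then show ?thesis
    by auto
qed

lemma Q_MKI_layered: "Q_MKI k n = layered_graph k n (=) odd False"
proof (rule graph_eqI)
  have Q: "Q_MKI k n = gunion (gUnion {1..k-1} (\<lambda>i. matching_g n (XV i) (XV (i+1))))
     (gUnion {i \<in> {1..k}. odd i} (\<lambda>i. clique_g (insert (YV i) (Xset n i))))"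
    unfolding Q_MKI_def odd_layer_indices[symmetric] gUnion_image ..
  show "gverts (Q_MKI k n) = gverts (layered_graph k n (=) odd False)"
    unfolding Q graph_union_simps
    apply (auto simp: Xset_def elim!: layer_vert.elims)
    subgoal for i a
      by (cases "i = 1") (auto simp: image_iff intro!: bexI[of _ "i - 1"])
    done
  show "gedges (Q_MKI k n) = gedges (layered_graph k n (=) odd False)"
    unfolding Q graph_union_simps unfolding layered_graph_def gedges_def snd_conv
    by (rule edges_of_eqI) (case_tac u; case_tac v; auto)+
qed

lemma gedges_layered_graphE:
  assumes "e \<in> gedges (layered_graph k n R K Z)"
  obtains u v where "e = {u, v}" "layer_adj k n R K Z u v"
  using assms by (auto simp: layered_graph_def gedges_def edges_of_def)

lemma closed_nbhd_layered_graph: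
  "closed_nbhd (layered_graph k n R K Z) v \<subseteq> insert v {u. layer_adj k n R K Z u v}"
  by (auto simp: closed_nbhd_def)

definition layer :: "nat \<Rightarrow> nat \<Rightarrow> nat \<Rightarrow> qv set" where
  "layer k n i = (if i \<in> {1..k} then Xset n i else {})"

definition apex :: "nat \<Rightarrow> (nat \<Rightarrow> bool) \<Rightarrow> nat \<Rightarrow> qv set" where
  "apex k K i = (if i \<in> {1..k} \<and> K i then {YV i} else {})"

definition hub :: "nat \<Rightarrow> bool \<Rightarrow> nat \<Rightarrow> qv set" where
  "hub k Z i = (if Z \<and> i \<in> {1..k-1} then {ZV i} else {})"

lemma XV_in_layer [simp]: "XV j a \<in> layer k n i \<longleftrightarrow> j = i \<and> i \<in> {1..k} \<and> a \<in> {1..n}"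
  and YV_notin_layer [simp]: "YV j \<notin> layer k n i"
  and ZV_notin_layer [simp]: "ZV j \<notin> layer k n i"
  by (auto simp: layer_def)

lemma YV_in_apex [simp]: "YV j \<in> apex k K i \<longleftrightarrow> j = i \<and> i \<in> {1..k} \<and> K i"
  and XV_notin_apex [simp]: "XV j a \<notin> apex k K i"
  and ZV_notin_apex [simp]: "ZV j \<notin> apex k K i"
  by (auto simp: apex_def)

lemma ZV_in_hub [simp]: "ZV j \<in> hub k Z i \<longleftrightarrow> j = i \<and> Z \<and> i \<in> {1..k-1}"
  and XV_notin_hub [simp]: "XV j a \<notin> hub k Z i"
  and YV_notin_hub [simp]: "YV j \<notin> hub k Z i"
  by (auto simp: hub_def)

lemma is_clique_apex_layer:
  assumes "K i"
  shows "is_clique (layered_graph k n R K Z) (apex k K i \<union> layer k n i)"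
  using assms unfolding is_clique_def by (auto simp: apex_def layer_def Xset_def)

lemma is_clique_hub_layer:
  assumes "K i" "i = j \<or> i = j + 1"
  shows "is_clique (layered_graph k n R K Z) (hub k Z j \<union> layer k n i)"
  using assms unfolding is_clique_def by (auto simp: hub_def layer_def Xset_def)

lemma is_clique_link:
  assumes "R a a" "i \<in> {1..k-1}" "a \<in> {1..n}"
  shows "is_clique (layered_graph k n R K Z) {XV i a, XV (i + 1) a}"
  using assms unfolding is_clique_def by auto

lemma alpha_star_layered_complete:
  assumes "k \<ge> 1" "n \<ge> 1"
  shows "alpha_star (layered_graph k n R (\<lambda>_. True) Z) \<le> 3"
proof (rule alpha_star_le)
  let ?G = "layered_graph k n R (\<lambda>_. True) Z"
  have clique: "is_clique ?G (apex k (\<lambda>_. True) i \<union> layer k n i)"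
    "is_clique ?G (hub k Z i \<union> layer k n i)" "is_clique ?G (hub k Z i \<union> layer k n (i + 1))" for i
    by (simp_all add: is_clique_apex_layer is_clique_hub_layer)
  show "gverts ?G \<noteq> {}"
    using assms by (auto intro!: exI[of _ "XV 1 1"])
  fix v assume "v \<in> gverts ?G"
  show "alpha_on ?G (closed_nbhd ?G v) \<le> 3"
  proof (cases v)
    case (XV i a)
    have cover: "closed_nbhd ?G v \<subseteq> \<Union>(set [apex k (\<lambda>_. True) i \<union> layer k n i,
        hub k Z (i - 1) \<union> layer k n (i - 1), hub k Z i \<union> layer k n (i + 1)])"
      using \<open>v \<in> gverts ?G\<close> closed_nbhd_layered_graph[of k n R "\<lambda>_. True" Z v] XV
      by (auto elim!: layer_adj.elims)
    show ?thesis
      using alpha_on_le_clique_cover[OF cover, where G = ?G] clique by simp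
  next
    case (YV i)
    have cover: "closed_nbhd ?G v \<subseteq> \<Union>(set [apex k (\<lambda>_. True) i \<union> layer k n i])"
      using \<open>v \<in> gverts ?G\<close> closed_nbhd_layered_graph[of k n R "\<lambda>_. True" Z v] YV
      by (auto elim!: layer_adj.elims)
    show ?thesis
      using alpha_on_le_clique_cover[OF cover, where G = ?G] clique by simp
  next
    case (ZV i)
    have cover: "closed_nbhd ?G v \<subseteq> \<Union>(set [hub k Z i \<union> layer k n i, hub k Z i \<union> layer k n (i + 1)])"
      using \<open>v \<in> gverts ?G\<close> closed_nbhd_layered_graph[of k n R "\<lambda>_. True" Z v] ZV
      by (auto elim!: layer_adj.elims)
    show ?thesis
      using alpha_on_le_clique_cover[OF cover, where G = ?G] clique by simp
  qed
qed

lemma alpha_star_layered_matching: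
  assumes "k \<ge> 1" "n \<ge> 1"
  shows "alpha_star (layered_graph k n (=) K False) \<le> 3"
proof (rule alpha_star_le)
  let ?G = "layered_graph k n (=) K False"
  show "gverts ?G \<noteq> {}"
    using assms by (auto intro!: exI[of _ "XV 1 1"])
  fix v assume v: "v \<in> gverts ?G"
  show "alpha_on ?G (closed_nbhd ?G v) \<le> 3"
  proof (cases v)
    case (XV i a)
    define C where "C = (if K i then apex k K i \<union> layer k n i else {v})"
    have "is_clique ?G C"
      by (simp add: C_def is_clique_apex_layer)
    moreover have cover: "closed_nbhd ?G v \<subseteq> \<Union>(set [C, {XV (i - 1) a}, {XV (i + 1) a}])"
      using v closed_nbhd_layered_graph[of k n "(=)" K False v] XV
      by (auto simp: C_def elim!: layer_adj.elims)
    ultimately show ?thesis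
      using alpha_on_le_clique_cover[OF cover, where G = ?G] by simp
  next
    case (YV i)
    have cover: "closed_nbhd ?G v \<subseteq> \<Union>(set [apex k K i \<union> layer k n i])"
      using v closed_nbhd_layered_graph[of k n "(=)" K False v] YV
      by (auto elim!: layer_adj.elims)
    have "K i"
      using v YV by simp
    then show ?thesis
      using alpha_on_le_clique_cover[OF cover, where G = ?G] is_clique_apex_layer by simp
  next
    case (ZV i)
    with v show ?thesis by simp
  qed
qed

fun layer_index :: "qv \<Rightarrow> nat" where
  "layer_index (XV i _) = i"
| "layer_index (YV i) = i"
| "layer_index (ZV i) = i"

definition path_bag :: "nat \<Rightarrow> nat \<Rightarrow> bool \<Rightarrow> nat \<Rightarrow> qv set" where
  "path_bag k n Z t = apex k (\<lambda>_. True) (t + 1) \<union> layer k n (t + 1) \<union> hub k Z (t + 1) \<union> layer k n (t + 2)"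

lemma alpha_tw_layered_complete:
  assumes "k \<ge> 1"
  shows "alpha_tw (layered_graph k n R (\<lambda>_. True) Z) \<le> 2"
proof -
  let ?G = "layered_graph k n R (\<lambda>_. True) Z"
  have "tree_decomp ?G {..<k} (parent_edges {..<k} (\<lambda>t. t - 1)) (path_bag k n Z)"
  proof (rule tree_decomp_parent_edges)
    show "finite {..<k}" "0 \<in> {..<k}"
      using assms by auto
    show "t - 1 \<in> {..<k} \<and> t - 1 < t" if "t \<in> {..<k}" "t \<noteq> 0" for t
      using that by auto
    show "path_bag k n Z t \<subseteq> gverts ?G" if "t \<in> {..<k}" for t
      using that by (auto simp: path_bag_def apex_def hub_def layer_def Xset_def)
    show "\<exists>t\<in>{..<k}. e \<subseteq> path_bag k n Z t" if e: "e \<in> gedges ?G" for e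
    proof -
      obtain u v where "e = {u, v}" "layer_adj k n R (\<lambda>_. True) Z u v"
        using e by (rule gedges_layered_graphE)
      then show ?thesis
        by (intro bexI[of _ "min (layer_index u) (layer_index v) - 1"])
          (cases u; cases v; auto simp: path_bag_def)+
    qed
    show "\<exists>r\<in>{..<k}. v \<in> path_bag k n Z r \<and>
        (\<forall>t\<in>{..<k}. v \<in> path_bag k n Z t \<longrightarrow> t \<noteq> r \<longrightarrow> t \<noteq> 0 \<and> v \<in> path_bag k n Z (t - 1))"
      if "v \<in> gverts ?G" for v
    proof -
      define r where "r = (case v of XV i _ \<Rightarrow> i - 2 | _ \<Rightarrow> layer_index v - 1)"
      show ?thesis
        using that by (intro bexI[of _ r]) (cases v; auto simp: r_def path_bag_def)+
    qed
  qed
  moreover have "alpha_on ?G (path_bag k n Z t) \<le> 2" for t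
  proof -
    have cover: "path_bag k n Z t \<subseteq>
        \<Union>(set [apex k (\<lambda>_. True) (t + 1) \<union> layer k n (t + 1), hub k Z (t + 1) \<union> layer k n (t + 2)])"
      by (auto simp: path_bag_def)
    then show ?thesis
      using alpha_on_le_clique_cover[OF cover, where G = ?G] by (simp add: is_clique_apex_layer is_clique_hub_layer)
  qed
  ultimately show ?thesis
    by (rule alpha_tw_le)
qed

definition odd_pair_bag :: "nat \<Rightarrow> nat \<Rightarrow> nat \<Rightarrow> qv set" where
  "odd_pair_bag k n s =
     apex k odd (2 * s + 1) \<union> layer k n (2 * s + 1) \<union> apex k odd (2 * s + 3) \<union> layer k n (2 * s + 3)"

definition matching_leaf_bag :: "nat \<Rightarrow> nat \<Rightarrow> nat \<Rightarrow> qv set" where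
  "matching_leaf_bag k s a =
     {XV (2 * s + 1) a, XV (2 * s + 2) a} \<union> (if 2 * s + 3 \<le> k then {XV (2 * s + 3) a} else {})"

lemma XV_in_odd_pair_bag [simp]:
  "XV i a \<in> odd_pair_bag k n s \<longleftrightarrow> (i = 2 * s + 1 \<or> i = 2 * s + 3) \<and> i \<le> k \<and> a \<in> {1..n}"
  and YV_in_odd_pair_bag [simp]: "YV i \<in> odd_pair_bag k n s \<longleftrightarrow> (i = 2 * s + 1 \<or> i = 2 * s + 3) \<and> i \<le> k"
  and ZV_notin_odd_pair_bag [simp]: "ZV i \<notin> odd_pair_bag k n s"
  by (auto simp: odd_pair_bag_def)

lemma XV_in_matching_leaf_bag [simp]:
  "XV i b \<in> matching_leaf_bag k s a \<longleftrightarrow> b = a \<and> (i = 2 * s + 1 \<or> i = 2 * s + 2 \<or> i = 2 * s + 3 \<and> i \<le> k)"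
  and YV_notin_matching_leaf_bag [simp]: "YV i \<notin> matching_leaf_bag k s a"
  and ZV_notin_matching_leaf_bag [simp]: "ZV i \<notin> matching_leaf_bag k s a"
  by (auto simp: matching_leaf_bag_def)

definition odd_layer_count :: "nat \<Rightarrow> nat" where
  "odd_layer_count k = (k + 1) div 2"

lemma less_odd_layer_count_iff [simp]: "s < odd_layer_count k \<longleftrightarrow> 2 * s + 1 \<le> k"
  unfolding odd_layer_count_def by presburger

definition odd_matching_nodes :: "nat \<Rightarrow> nat \<Rightarrow> nat set" where
  "odd_matching_nodes k n = caterpillar_nodes (odd_layer_count k) ({s. 2 * s + 2 \<le> k} \<times> {1..n})"

definition odd_matching_bag :: "nat \<Rightarrow> nat \<Rightarrow> nat \<Rightarrow> qv set" where
  "odd_matching_bag k n = caterpillar_bag (odd_layer_count k) (odd_pair_bag k n) (matching_leaf_bag k)"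

definition odd_matching_parent :: "nat \<Rightarrow> nat \<Rightarrow> nat" where
  "odd_matching_parent k = caterpillar_parent (odd_layer_count k)"

lemma odd_matching_spine [simp]:
  "2 * s + 1 \<le> k \<Longrightarrow> odd_matching_bag k n s = odd_pair_bag k n s"
  "2 * s + 1 \<le> k \<Longrightarrow> odd_matching_parent k s = s - 1"
  by (simp_all add: odd_matching_bag_def odd_matching_parent_def)

lemma odd_matching_leaf [simp]:
  "odd_matching_bag k n (odd_layer_count k + prod_encode (s, a)) = matching_leaf_bag k s a"
  "odd_matching_parent k (odd_layer_count k + prod_encode (s, a)) = s"
  by (simp_all add: odd_matching_bag_def odd_matching_parent_def)

lemma odd_matching_nodesE:
  assumes "t \<in> odd_matching_nodes k n"
  obtains (spine) "2 * t + 1 \<le> k"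
  | (leaf) s a where "2 * s + 2 \<le> k" "a \<in> {1..n}" "t = odd_layer_count k + prod_encode (s, a)"
  using assms unfolding odd_matching_nodes_def by (cases rule: caterpillar_nodesE) auto

lemma spine_in_odd_matching_nodes: "2 * s + 1 \<le> k \<Longrightarrow> s \<in> odd_matching_nodes k n"
  by (simp add: odd_matching_nodes_def caterpillar_nodes_def)

lemma leaf_in_odd_matching_nodes:
  "2 * s + 2 \<le> k \<Longrightarrow> a \<in> {1..n} \<Longrightarrow> odd_layer_count k + prod_encode (s, a) \<in> odd_matching_nodes k n"
  by (auto simp: odd_matching_nodes_def caterpillar_nodes_def)

lemma layer_adj_odd_matching_cases:
  assumes "layer_adj k n (=) odd False u v"
  obtains (clique) s where "2 * s + 1 \<le> k" "{u, v} \<subseteq> apex k odd (2 * s + 1) \<union> layer k n (2 * s + 1)"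
  | (link) i a where "i \<in> {1..k-1}" "a \<in> {1..n}" "{u, v} = {XV i a, XV (i + 1) a}"
proof -
  have "(\<exists>i. odd i \<and> i \<le> k \<and> {u, v} \<subseteq> apex k odd i \<union> layer k n i) \<or>
      (\<exists>i a. i \<in> {1..k-1} \<and> a \<in> {1..n} \<and> {u, v} = {XV i a, XV (i + 1) a})"
    using assms
    apply (cases u; cases v; simp)
    apply (elim conjE disjE)
    subgoal by simp
    subgoal for i a j b by (intro disjI2 exI[of _ i] exI[of _ a]) auto
    subgoal for i a j b by (intro disjI2 exI[of _ j] exI[of _ b]) (auto simp: insert_commute)
    done
  then show ?thesis
    using that by (metis oddE)
qed

lemma positive_parityE:
  assumes "(i :: nat) \<ge> 1"
  obtains (odd) s where "i = 2 * s + 1" | (even) s where "i = 2 * s + 2"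
proof -
  have "\<exists>s. i = 2 * s + 1 \<or> i = 2 * s + 2"
    using assms by presburger
  then show ?thesis
    using that by blast
qed

lemma odd_matching_root_odd_layer:
  assumes v: "v = YV (2 * s + 1) \<or> v = XV (2 * s + 1) a \<and> a \<in> {1..n}" and "2 * s + 1 \<le> k"
  shows "\<exists>r\<in>odd_matching_nodes k n. v \<in> odd_matching_bag k n r \<and>
    (\<forall>t\<in>odd_matching_nodes k n. v \<in> odd_matching_bag k n t \<longrightarrow> t \<noteq> r \<longrightarrow>
      t \<noteq> 0 \<and> v \<in> odd_matching_bag k n (odd_matching_parent k t))"
proof -
  have "s - 1 \<in> odd_matching_nodes k n" "v \<in> odd_matching_bag k n (s - 1)"
    using assms by (auto simp: spine_in_odd_matching_nodes)
  moreover have "t \<noteq> 0 \<and> v \<in> odd_matching_bag k n (odd_matching_parent k t)"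
    if t: "t \<in> odd_matching_nodes k n" and in_t: "v \<in> odd_matching_bag k n t" and "t \<noteq> s - 1" for t
    using t
  proof (cases rule: odd_matching_nodesE)
    case spine
    with in_t \<open>t \<noteq> s - 1\<close> have "t = s" "s \<noteq> 0"
      using v by auto
    then show ?thesis
      using assms by auto
  next
    case (leaf s' a')
    then have "t \<noteq> 0"
      by (simp add: odd_layer_count_def)
    moreover have "s' = s \<or> s' + 1 = s"
      using in_t leaf v by auto
    ultimately show ?thesis
      using assms leaf by auto
  qed
  ultimately show ?thesis
    by blast
qed

lemma odd_matching_root_even_layer:
  assumes "2 * s + 2 \<le> k" "a \<in> {1..n}"
  shows "\<exists>r\<in>odd_matching_nodes k n. XV (2 * s + 2) a \<in> odd_matching_bag k n r \<and>
    (\<forall>t\<in>odd_matching_nodes k n. XV (2 * s + 2) a \<in> odd_matching_bag k n t \<longrightarrow> t \<noteq> r \<longrightarrow>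
      t \<noteq> 0 \<and> XV (2 * s + 2) a \<in> odd_matching_bag k n (odd_matching_parent k t))"
proof -
  let ?r = "odd_layer_count k + prod_encode (s, a)"
  have "t = ?r" if t: "t \<in> odd_matching_nodes k n" and in_t: "XV (2 * s + 2) a \<in> odd_matching_bag k n t" for t
    using t
  proof (cases rule: odd_matching_nodesE)
    case spine
    with in_t show ?thesis
      by simp presburger
  next
    case (leaf s' a')
    with in_t show ?thesis
      by simp presburger
  qed
  then show ?thesis
    using assms by (intro bexI[of _ ?r]) (auto intro: leaf_in_odd_matching_nodes)
qed

lemma odd_matching_root:
  assumes "layer_vert k n odd False v"
  shows "\<exists>r\<in>odd_matching_nodes k n. v \<in> odd_matching_bag k n r \<and>
    (\<forall>t\<in>odd_matching_nodes k n. v \<in> odd_matching_bag k n t \<longrightarrow> t \<noteq> r \<longrightarrow>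
      t \<noteq> 0 \<and> v \<in> odd_matching_bag k n (odd_matching_parent k t))"
proof (cases v)
  case (XV i a)
  with assms have "i \<in> {1..k}" "a \<in> {1..n}"
    by auto
  then have "i \<ge> 1"
    by simp
  then show ?thesis
  proof (cases rule: positive_parityE)
    case (odd s)
    with XV \<open>i \<in> {1..k}\<close> \<open>a \<in> {1..n}\<close> show ?thesis
      by (intro odd_matching_root_odd_layer) auto
  next
    case (even s)
    with XV \<open>i \<in> {1..k}\<close> \<open>a \<in> {1..n}\<close> show ?thesis
      using odd_matching_root_even_layer[of s k a n] by simp
  qed
next
  case (YV i)
  with assms obtain s where "i = 2 * s + 1" "i \<le> k"
    by (auto elim: oddE)
  with YV show ?thesis
    using odd_matching_root_odd_layer by blast
next
  case (ZV i)
  with assms show ?thesis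
    by simp
qed

lemma odd_matching_bag_covers_edge:
  assumes "layer_adj k n (=) odd False u v"
  shows "\<exists>t\<in>odd_matching_nodes k n. {u, v} \<subseteq> odd_matching_bag k n t"
  using assms
proof (cases rule: layer_adj_odd_matching_cases)
  case (clique s)
  then show ?thesis
    by (intro bexI[of _ s]) (auto simp: odd_pair_bag_def spine_in_odd_matching_nodes)
next
  case (link i a)
  then have "i \<ge> 1"
    by simp
  then show ?thesis
  proof (cases rule: positive_parityE)
    case (odd s)
    with link show ?thesis
      by (intro bexI[of _ "odd_layer_count k + prod_encode (s, a)"] leaf_in_odd_matching_nodes) auto
  next
    case (even s)
    with link show ?thesis
      by (intro bexI[of _ "odd_layer_count k + prod_encode (s, a)"] leaf_in_odd_matching_nodes) auto
  qed
qed

lemma odd_matching_bag_subset: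
  assumes "t \<in> odd_matching_nodes k n"
  shows "odd_matching_bag k n t \<subseteq> Collect (layer_vert k n odd False)"
  using assms
proof (cases rule: odd_matching_nodesE)
  case spine
  then show ?thesis
    by (auto simp: odd_pair_bag_def apex_def layer_def Xset_def)
next
  case (leaf s a)
  then show ?thesis
    by (auto simp: matching_leaf_bag_def)
qed

lemma alpha_on_odd_matching_bag:
  assumes "t \<in> odd_matching_nodes k n"
  shows "alpha_on (layered_graph k n (=) odd False) (odd_matching_bag k n t) \<le> 2"
  using assms
proof (cases rule: odd_matching_nodesE)
  case spine
  then have cover: "odd_matching_bag k n t \<subseteq>
      \<Union>(set [apex k odd (2 * t + 1) \<union> layer k n (2 * t + 1), apex k odd (2 * t + 3) \<union> layer k n (2 * t + 3)])"
    by (auto simp: odd_pair_bag_def)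
  show ?thesis
    using alpha_on_le_clique_cover[OF cover, where G = "layered_graph k n (=) odd False"]
    by (simp add: is_clique_apex_layer)
next
  case (leaf s a)
  then have cover: "odd_matching_bag k n t \<subseteq> \<Union>(set [{XV (2 * s + 1) a, XV (2 * s + 2) a}, {XV (2 * s + 3) a}])"
    by (auto simp: matching_leaf_bag_def)
  have "is_clique (layered_graph k n (=) odd False) {XV (2 * s + 1) a, XV (2 * s + 2) a}"
    using leaf is_clique_link[of "(=)" a "2 * s + 1" k n] by simp
  then show ?thesis
    using alpha_on_le_clique_cover[OF cover, where G = "layered_graph k n (=) odd False"] by simp
qed

lemma alpha_tw_layered_odd_matching:
  assumes "k \<ge> 1"
  shows "alpha_tw (layered_graph k n (=) odd False) \<le> 2"
proof (rule alpha_tw_le)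
  show "tree_decomp (layered_graph k n (=) odd False) (odd_matching_nodes k n)
      (parent_edges (odd_matching_nodes k n) (odd_matching_parent k)) (odd_matching_bag k n)"
  proof (rule tree_decomp_parent_edges)
    have "{s. 2 * s + 2 \<le> k} \<subseteq> {..k}"
      by auto
    then show "finite (odd_matching_nodes k n)"
      unfolding odd_matching_nodes_def by (intro finite_caterpillar_nodes finite_cartesian_product)
        (auto intro: finite_subset)
    show "0 \<in> odd_matching_nodes k n"
      using assms by (simp add: spine_in_odd_matching_nodes)
    show "odd_matching_parent k t \<in> odd_matching_nodes k n \<and> odd_matching_parent k t < t"
      if "t \<in> odd_matching_nodes k n" "t \<noteq> 0" for t
      using that unfolding odd_matching_parent_def odd_matching_nodes_def
      by (intro caterpillar_parent_less) auto
    show "\<exists>t\<in>odd_matching_nodes k n. e \<subseteq> odd_matching_bag k n t"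
      if "e \<in> gedges (layered_graph k n (=) odd False)" for e
      using that by (auto elim!: gedges_layered_graphE dest: odd_matching_bag_covers_edge)
    show "\<exists>r\<in>odd_matching_nodes k n. v \<in> odd_matching_bag k n r \<and>
        (\<forall>t\<in>odd_matching_nodes k n. v \<in> odd_matching_bag k n t \<longrightarrow> t \<noteq> r \<longrightarrow>
          t \<noteq> 0 \<and> v \<in> odd_matching_bag k n (odd_matching_parent k t))"
      if "v \<in> gverts (layered_graph k n (=) odd False)" for v
      using that odd_matching_root by simp
  qed (simp add: odd_matching_bag_subset)
qed (rule alpha_on_odd_matching_bag)

theorem lemma8p5:
  fixes n :: nat and Q :: "qv graph"
  assumes "n \<ge> 3"
    and "Q \<in> {Q_MKI n n, Q_MKK n n, Q_AKK n n, Q_HKK n n}"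
  shows "alpha_tw Q \<le> 2 \<and> alpha_star Q \<le> 3"
proof -
  have "n \<ge> 1"
    using assms(1) by simp
  from assms(2) consider "Q = layered_graph n n (=) odd False"
    | R Z where "Q = layered_graph n n R (\<lambda>_. True) Z"
    by (auto simp: Q_MKI_layered Q_MKK_layered Q_AKK_layered Q_HKK_layered)
  then show ?thesis
  proof cases
    case 1
    with \<open>n \<ge> 1\<close> show ?thesis
      by (simp add: alpha_tw_layered_odd_matching alpha_star_layered_matching)
  next
    case 2
    with \<open>n \<ge> 1\<close> show ?thesis
      by (simp add: alpha_tw_layered_complete alpha_star_layered_complete)
  qed
qed

end
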